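(* Let $G$ be an innately transitive permutation group on a finite set $\Omega$ and let $M$ be a plinth of $G$. If $\{\Gamma_1,\ldots,\Gamma_\ell\}$ is a $G$-invariant Cartesian decomposition of $\Omega$, then each $\Gamma_i$ ($1\le i\le \ell$) is an $M$-invariant partition of $\Omega$, that is, every element of $M$ maps each part of $\Gamma_i$ onto a part of $\Gamma_i$.
   Context: A Cartesian decomposition of a finite set $\Omega$ is a set $\mathcal E=\{\Gamma_1,\ldots,\Gamma_\ell\}$ of partitions of $\Omega$ such that $|\gamma_1\cap\cdots\cap\gamma_\ell|=1$ for all $\gamma_1\in\Gamma_1,\ldots,\gamma_\ell\in\Gamma_\ell$. For $g\in\mathrm{Sym}(\Omega)$, $\mathcal E$ is $g$-invariant if $g$ permutes the partitions in $\mathcal E$ (i.e. for each $i$ the image of $\Gamma_i$ under $g$ is some $\Gamma_j$); $\mathcal E$ is $G$-invariant if it is $g$-invariant for all $g\in G$. A finite permutation group is innately transitive if it has at least one transitive minimal normal subgroup; such a transitive minimal normal subgroup is called a plinth. *)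

theory Defs
  imports "HOL-Algebra.Bij" "HOL-Algebra.Coset" "HOL-Library.Disjoint_Sets"
begin

text \<open>A permutation group on \<Omega> is a subgroup G of the symmetric group BijGroup \<Omega>
  (elements are bijections of \<Omega>, extensional outside \<Omega>).\<close>

definition perm_grp :: "'a set \<Rightarrow> ('a \<Rightarrow> 'a) set \<Rightarrow> ('a \<Rightarrow> 'a) monoid" where
  "perm_grp \<Omega> G = (BijGroup \<Omega>)\<lparr>carrier := G\<rparr>"

definition perm_group_on :: "'a set \<Rightarrow> ('a \<Rightarrow> 'a) set \<Rightarrow> bool" where
  "perm_group_on \<Omega> G \<longleftrightarrow> subgroup G (BijGroup \<Omega>)"

definition transitive_on :: "'a set \<Rightarrow> ('a \<Rightarrow> 'a) set \<Rightarrow> bool" where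
  "transitive_on \<Omega> M \<longleftrightarrow> (\<forall>x\<in>\<Omega>. \<forall>y\<in>\<Omega>. \<exists>m\<in>M. m x = y)"

definition minimal_normal :: "'a set \<Rightarrow> ('a \<Rightarrow> 'a) set \<Rightarrow> ('a \<Rightarrow> 'a) set \<Rightarrow> bool" where
  "minimal_normal \<Omega> G M \<longleftrightarrow>
     M \<lhd> perm_grp \<Omega> G \<and> M \<noteq> {\<one>\<^bsub>perm_grp \<Omega> G\<^esub>} \<and>
     (\<forall>N. N \<lhd> perm_grp \<Omega> G \<longrightarrow> N \<subseteq> M \<longrightarrow> N = {\<one>\<^bsub>perm_grp \<Omega> G\<^esub>} \<or> N = M)"

definition plinth :: "'a set \<Rightarrow> ('a \<Rightarrow> 'a) set \<Rightarrow> ('a \<Rightarrow> 'a) set \<Rightarrow> bool" where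
  "plinth \<Omega> G M \<longleftrightarrow> minimal_normal \<Omega> G M \<and> transitive_on \<Omega> M"

definition innately_transitive :: "'a set \<Rightarrow> ('a \<Rightarrow> 'a) set \<Rightarrow> bool" where
  "innately_transitive \<Omega> G \<longleftrightarrow> perm_group_on \<Omega> G \<and> (\<exists>M. plinth \<Omega> G M)"

definition cartesian_decomposition :: "'a set \<Rightarrow> 'a set set set \<Rightarrow> bool" where
  "cartesian_decomposition \<Omega> E \<longleftrightarrow>
     (\<forall>\<Gamma>\<in>E. partition_on \<Omega> \<Gamma>) \<and>
     (\<forall>c. (\<forall>\<Gamma>\<in>E. c \<Gamma> \<in> \<Gamma>) \<longrightarrow> card (\<Omega> \<inter> (\<Inter>\<Gamma>\<in>E. c \<Gamma>)) = 1)"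

definition part_image :: "('a \<Rightarrow> 'a) \<Rightarrow> 'a set set \<Rightarrow> 'a set set" where
  "part_image g \<Gamma> = (\<lambda>\<gamma>. g ` \<gamma>) ` \<Gamma>"

definition invariant_decomposition :: "('a \<Rightarrow> 'a) set \<Rightarrow> 'a set set set \<Rightarrow> bool" where
  "invariant_decomposition G E \<longleftrightarrow> (\<forall>g\<in>G. \<forall>\<Gamma>\<in>E. part_image g \<Gamma> \<in> E)"

definition invariant_partition :: "('a \<Rightarrow> 'a) set \<Rightarrow> 'a set set \<Rightarrow> bool" where
  "invariant_partition M \<Gamma> \<longleftrightarrow> (\<forall>m\<in>M. \<forall>\<gamma>\<in>\<Gamma>. m ` \<gamma> \<in> \<Gamma>)"

end

theory Submission
  imports Defs "HOL-Combinatorics.Permutations" "HOL-Algebra.Group_Action"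
    "HOL-Computational_Algebra.Primes"
begin

text \<open>Let \<Gamma> \<in> E and let Q be its G-orbit in E. The kernel K of the action of G on Q is normal,
  so by minimality M \<inter> K is trivial or all of M. If M \<subseteq> K, then M fixes \<Gamma>. Otherwise M embeds
  into Sym(Q), so |M| divides |Q|!. Transitivity of M gives |\<Omega>| dividing |M|, and
  |\<Omega>| = \<Prod>\<Delta>\<in>E. |\<Delta>| is divisible by |\<Gamma>|^|Q|. By Legendre's formula n^r divides r! only
  for n = 1, and a partition with a single part is invariant under every permutation.\<close>

lemma multiplicity_fact_div:
  fixes p n :: nat
  assumes p: "prime p"
  shows "multiplicity p (fact n) = n div p + multiplicity p (fact (n div p))"
proof (induction n)
  case 0
  show ?case by simp
next
  case (Suc n)
  have fact_Suc: "multiplicity p (fact (Suc k)) = multiplicity p (Suc k) + multiplicity p (fact k)"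
    for k :: nat
  proof -
    have "fact (Suc k) = Suc k * (fact k :: nat)" by simp
    then show ?thesis
      by (simp only:) (intro prime_elem_multiplicity_mult_distrib; use p in simp)
  qed
  show ?case
  proof (cases "p dvd Suc n")
    case False
    then have "Suc n div p = n div p" and "multiplicity p (Suc n) = 0"
      by (auto simp: div_Suc dvd_eq_mod_eq_0 not_dvd_imp_multiplicity_0)
    then show ?thesis using Suc.IH fact_Suc[of n] by simp
  next
    case True
    then obtain k where k: "Suc n = p * Suc k"
      by (metis dvdE mult_0_right nat.distinct(1) not0_implies_Suc)
    have "n div p = k"
      using k prime_gt_0_nat[OF p] by (intro div_nat_eqI) (simp_all add: mult_Suc_right)
    moreover have "Suc n div p = Suc k" using k p prime_gt_0_nat by simp
    moreover have "multiplicity p (Suc n) = Suc (multiplicity p (Suc k))"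
      unfolding k using p by (intro multiplicity_times_same) (auto dest: not_prime_unit)
    ultimately show ?thesis using Suc.IH fact_Suc[of n] fact_Suc[of k] by simp
  qed
qed

lemma multiplicity_fact_less:
  fixes p n :: nat
  assumes p: "prime p" and "n > 0"
  shows "multiplicity p (fact n) < n"
  using \<open>n > 0\<close>
proof (induction n rule: less_induct)
  case (less n)
  have "2 * (n div p) \<le> p * (n div p)" using prime_ge_2_nat[OF p] by simp
  also have "\<dots> \<le> n" by simp
  finally have double_div: "2 * (n div p) \<le> n" .
  show ?case
  proof (cases "n div p = 0")
    case True
    then show ?thesis using multiplicity_fact_div[OF p, of n] less.prems by simp
  next
    case False
    have "n div p < n" using less.prems prime_gt_1_nat[OF p] by simp
    then have "multiplicity p (fact (n div p)) < n div p" using less.IH False by blast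
    then show ?thesis using multiplicity_fact_div[OF p, of n] double_div by linarith
  qed
qed

lemma power_dvd_fact_imp_eq_1:
  fixes k n :: nat
  assumes dvd: "k ^ n dvd fact n" and "n > 0"
  shows "k = 1"
proof (rule ccontr)
  assume "k \<noteq> 1"
  then obtain p where p: "prime p" "p dvd k" using prime_factor_nat by blast
  have "p ^ n dvd fact n" using dvd p(2) by (meson dvd_power_same dvd_trans)
  then have "n \<le> multiplicity p (fact n :: nat)"
    by (intro multiplicity_geI) (use p(1) not_prime_unit in auto)
  with multiplicity_fact_less[OF p(1) \<open>n > 0\<close>] show False by simp
qed

lemma card_Bij:
  assumes "finite S"
  shows "card (Bij S) = fact (card S)"
proof -
  have inj: "inj_on (\<lambda>p. restrict p S) {p. p permutes S}"
  proof (rule inj_onI)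
    fix p q assume "p \<in> {p. p permutes S}" "q \<in> {p. p permutes S}" "restrict p S = restrict q S"
    then show "p = q" by (metis mem_Collect_eq permutes_not_in restrict_apply' ext)
  qed
  have "Bij S = (\<lambda>p. restrict p S) ` {p. p permutes S}"
  proof (intro equalityI subsetI)
    fix f assume f: "f \<in> Bij S"
    let ?p = "\<lambda>x. if x \<in> S then f x else x"
    have "bij_betw ?p S S" using f by (simp add: Bij_def cong: bij_betw_cong)
    then have "?p permutes S" by (rule bij_imp_permutes) simp
    moreover have "restrict ?p S = f" using Bij_imp_extensional[OF f] by (auto simp: extensional_def)
    ultimately show "f \<in> (\<lambda>p. restrict p S) ` {p. p permutes S}"
      by (metis (mono_tags, lifting) image_eqI mem_Collect_eq)
  next
    fix f assume "f \<in> (\<lambda>p. restrict p S) ` {p. p permutes S}"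
    then show "f \<in> Bij S" by (auto simp: Bij_def permutes_imp_bij)
  qed
  then show ?thesis using card_image[OF inj] card_permutations[OF refl assms] by simp
qed

lemma (in group_action) restrict_action:
  assumes "F \<subseteq> E" and closed: "\<And>g y. g \<in> carrier G \<Longrightarrow> y \<in> F \<Longrightarrow> \<phi> g y \<in> F"
  shows "group_action G F (\<lambda>g. restrict (\<phi> g) F)"
proof -
  interpret group G using group_hom group_hom.axioms(1) by blast
  have Bij: "restrict (\<phi> g) F \<in> Bij F" if g: "g \<in> carrier G" for g
  proof -
    have "inj_on (\<phi> g) F" using inj_prop[OF g] assms(1) by (rule inj_on_subset)
    moreover have "F \<subseteq> \<phi> g ` F"
    proof
      fix y assume y: "y \<in> F"
      have "\<phi> g (\<phi> (inv g) y) = \<phi> (g \<otimes> inv g) y"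
        using y g assms(1) composition_rule[of y g "inv g"] by auto
      also have "\<dots> = y" using y g assms(1) id_eq_one[symmetric] by auto
      finally show "y \<in> \<phi> g ` F" using closed[OF inv_closed[OF g] y] by (metis image_eqI)
    qed
    ultimately show ?thesis using closed[OF g] by (auto simp: Bij_def bij_betw_def)
  qed
  have "restrict (\<phi> (g \<otimes> h)) F = compose F (restrict (\<phi> g) F) (restrict (\<phi> h) F)"
    if "g \<in> carrier G" "h \<in> carrier G" for g h
    using that closed assms(1) by (auto simp: compose_def composition_rule intro!: restrict_ext)
  then show ?thesis
    using Bij group_hom group_BijGroup
    by (auto simp: group_action_def group_hom_def group_hom_axioms_def hom_def BijGroup_def)
qed

lemma (in group_action) orbit_action:
  assumes "x \<in> E"
  shows "group_action G (orbit G \<phi> x) (\<lambda>g. restrict (\<phi> g) (orbit G \<phi> x))"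
proof (rule restrict_action)
  show "orbit G \<phi> x \<subseteq> E" using assms element_image by (auto simp: orbit_def)
  show "\<phi> g y \<in> orbit G \<phi> x" if g: "g \<in> carrier G" and "y \<in> orbit G \<phi> x" for g y
  proof -
    interpret group G using group_hom group_hom.axioms(1) by blast
    obtain h where h: "h \<in> carrier G" "y = \<phi> h x" using \<open>y \<in> orbit G \<phi> x\<close> by (auto simp: orbit_def)
    then have "\<phi> g y = \<phi> (g \<otimes> h) x" using g assms by (simp add: composition_rule)
    then show ?thesis using g h(1) by (auto simp: orbit_def)
  qed
qed

lemma (in group_action) card_subgroup_dvd_fact:
  assumes "finite E" and M: "subgroup M G" and "M \<inter> kernel G (BijGroup E) \<phi> = {\<one>}"
  shows "card M dvd fact (card E)"
proof -
  have "kernel (G\<lparr>carrier := M\<rparr>) (BijGroup E) \<phi> = M \<inter> kernel G (BijGroup E) \<phi>"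
    using subgroup.subset[OF M] by (auto simp: kernel_def)
  then have "inj_on \<phi> M"
    using assms(3) group_hom.inj_on_subgroup_iff_trivial_ker[OF group_hom M] by simp
  then have "card M = card (\<phi> ` M)" by (simp add: card_image)
  also have "\<dots> dvd order (BijGroup E)"
    using group.lagrange[OF group_BijGroup group_hom.subgroup_img_is_subgroup[OF group_hom M]]
    by (metis dvd_triv_right)
  also have "order (BijGroup E) = fact (card E)"
    using card_Bij[OF \<open>finite E\<close>] by (simp add: order_def BijGroup_def)
  finally show ?thesis .
qed

lemma card_dvd_card_transitive_subgroup:
  assumes M: "subgroup M (BijGroup \<Omega>)" and "transitive_on \<Omega> M" and "\<Omega> \<noteq> {}"
  shows "card \<Omega> dvd card M"
proof -
  obtain \<omega> where "\<omega> \<in> \<Omega>" using \<open>\<Omega> \<noteq> {}\<close> by blast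
  let ?M = "(BijGroup \<Omega>)\<lparr>carrier := M\<rparr>"
  have "group_action ?M \<Omega> id"
    using group.canonical_inj_is_hom[OF group_BijGroup M] by (simp add: group_action_def)
  moreover have "orbit ?M id \<omega> = \<Omega>"
  proof -
    have "M \<subseteq> Bij \<Omega>" using subgroup.subset[OF M] by (simp add: BijGroup_def)
    then show ?thesis
      using assms(2) \<open>\<omega> \<in> \<Omega>\<close> unfolding orbit_def transitive_on_def
      by (auto dest!: Bij_imp_funcset) metis
  qed
  ultimately have "card \<Omega> * card (stabilizer ?M id \<omega>) = card M"
    using group_action.orbit_stabilizer_theorem[of ?M \<Omega> id \<omega>] \<open>\<omega> \<in> \<Omega>\<close> by (simp add: order_def)
  then show ?thesis by (metis dvd_triv_left)
qed

lemma (in group_action) minimal_normal_acts_trivially_or_card_dvd_fact: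
  assumes "finite E" and M: "M \<lhd> G" and minimal: "\<And>N. N \<lhd> G \<Longrightarrow> N \<subseteq> M \<Longrightarrow> N = {\<one>} \<or> N = M"
  shows "(\<forall>m\<in>M. \<forall>x\<in>E. \<phi> m x = x) \<or> card M dvd fact (card E)"
proof -
  interpret group G using group_hom group_hom.axioms(1) by blast
  let ?K = "kernel G (BijGroup E) \<phi>"
  have "M \<inter> ?K \<lhd> G"
    using normal_subgroup_intersect[OF M group_hom.normal_kernel[OF group_hom]] .
  then have "M \<inter> ?K = {\<one>} \<or> M \<subseteq> ?K" using minimal by blast
  then show ?thesis
  proof
    assume "M \<inter> ?K = {\<one>}"
    then show ?thesis using card_subgroup_dvd_fact \<open>finite E\<close> M normal_imp_subgroup by blast
  next
    assume "M \<subseteq> ?K"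
    then show ?thesis by (auto simp: kernel_def BijGroup_def)
  qed
qed

lemma perm_group_on_subset_Bij: "perm_group_on \<Omega> G \<Longrightarrow> G \<subseteq> Bij \<Omega>"
  using subgroup.subset[of G "BijGroup \<Omega>"] by (simp add: perm_group_on_def BijGroup_def)

lemma minimal_normal_subgroup_BijGroup:
  assumes "perm_group_on \<Omega> G" and "minimal_normal \<Omega> G M"
  shows "subgroup M (BijGroup \<Omega>)"
proof -
  have "subgroup M (perm_grp \<Omega> G)" using assms(2) by (simp add: minimal_normal_def normal_imp_subgroup)
  then show ?thesis
    using group.incl_subgroup[OF group_BijGroup] assms(1) by (simp add: perm_group_on_def perm_grp_def)
qed

text \<open>Restricting to set systems on \<Omega> makes each map extensional, as \<open>BijGroup\<close> requires.\<close>
definition part_image_action :: "'a set \<Rightarrow> ('a \<Rightarrow> 'a) \<Rightarrow> 'a set set \<Rightarrow> 'a set set" where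
  "part_image_action \<Omega> g = (\<lambda>\<Delta>\<in>Pow (Pow \<Omega>). part_image g \<Delta>)"

lemma part_image_compose:
  assumes "\<Delta> \<subseteq> Pow \<Omega>"
  shows "part_image (compose \<Omega> g h) \<Delta> = part_image g (part_image h \<Delta>)"
proof -
  have "compose \<Omega> g h ` \<gamma> = g ` h ` \<gamma>" if "\<gamma> \<in> \<Delta>" for \<gamma>
    using that assms by (force simp: compose_def)
  then show ?thesis by (force simp: part_image_def)
qed

lemma bij_betw_part_image:
  assumes "g \<in> Bij \<Omega>"
  shows "bij_betw (part_image g) (Pow (Pow \<Omega>)) (Pow (Pow \<Omega>))"
proof -
  have "bij_betw (image g) (Pow \<Omega>) (Pow \<Omega>)" using assms by (simp add: Bij_def bij_betw_Pow)
  then have "bij_betw (image (image g)) (Pow (Pow \<Omega>)) (Pow (Pow \<Omega>))" by (rule bij_betw_Pow)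
  then show ?thesis by (simp add: part_image_def[abs_def])
qed

lemma card_part_image:
  assumes "g \<in> Bij \<Omega>" and "\<Delta> \<subseteq> Pow \<Omega>"
  shows "card (part_image g \<Delta>) = card \<Delta>"
proof -
  have "inj_on (image g) \<Delta>"
    using assms inj_on_image_Pow[of g \<Omega>] by (auto simp: Bij_def bij_betw_def intro: inj_on_subset)
  then show ?thesis by (simp add: part_image_def card_image)
qed

lemma part_image_restrict_id:
  assumes "\<Delta> \<subseteq> Pow \<Omega>"
  shows "part_image (\<lambda>x\<in>\<Omega>. x) \<Delta> = \<Delta>"
proof -
  have "(\<lambda>x\<in>\<Omega>. x) ` \<gamma> = \<gamma>" if "\<gamma> \<in> \<Delta>" for \<gamma>
    using that assms by auto
  then show ?thesis unfolding part_image_def by simp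
qed

lemma group_action_part_image: "group_action (BijGroup \<Omega>) (Pow (Pow \<Omega>)) (part_image_action \<Omega>)"
proof -
  have "part_image_action \<Omega> g \<in> Bij (Pow (Pow \<Omega>))" if "g \<in> Bij \<Omega>" for g
    using bij_betw_part_image[OF that] by (simp add: part_image_action_def Bij_def)
  moreover have "part_image_action \<Omega> (compose \<Omega> g h)
      = compose (Pow (Pow \<Omega>)) (part_image_action \<Omega> g) (part_image_action \<Omega> h)"
    if "g \<in> Bij \<Omega>" "h \<in> Bij \<Omega>" for g h
    using bij_betwE[OF bij_betw_part_image[OF that(2)]] unfolding compose_def[of "Pow (Pow \<Omega>)"]
    by (auto simp: part_image_action_def part_image_compose intro!: restrict_ext)
  ultimately show ?thesis
    using group_BijGroup[of \<Omega>] group_BijGroup[of "Pow (Pow \<Omega>)"]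
    by (auto simp: group_action_def group_hom_def group_hom_axioms_def hom_def BijGroup_def)
qed

lemma partition_on_subset_Pow: "partition_on \<Omega> \<Delta> \<Longrightarrow> \<Delta> \<subseteq> Pow \<Omega>"
  by (auto dest: partition_onD1)

lemma finite_cartesian_decomposition:
  assumes "finite \<Omega>" and "cartesian_decomposition \<Omega> E"
  shows "finite E"
proof -
  have "E \<subseteq> Pow (Pow \<Omega>)"
    using assms(2) by (auto simp: cartesian_decomposition_def dest: partition_on_subset_Pow)
  then show ?thesis using assms(1) by (simp add: finite_subset)
qed

lemma card_cartesian_decomposition:
  assumes "finite \<Omega>" and cd: "cartesian_decomposition \<Omega> E"
  shows "card \<Omega> = (\<Prod>\<Delta>\<in>E. card \<Delta>)"
proof -
  let ?C = "\<Pi>\<^sub>E \<Delta>\<in>E. \<Delta>" and ?pt = "\<lambda>c. \<Omega> \<inter> (\<Inter>\<Delta>\<in>E. c \<Delta>)"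
  have part: "partition_on \<Omega> \<Delta>" if "\<Delta> \<in> E" for \<Delta>
    using cd that by (simp add: cartesian_decomposition_def)
  have finite_C: "finite ?C"
    using assms finite_cartesian_decomposition finite_elements[OF assms(1) part]
    by (intro finite_PiE) auto
  have "\<Omega> = (\<Union>c\<in>?C. ?pt c)"
  proof (intro equalityI subsetI)
    fix \<omega> assume "\<omega> \<in> \<Omega>"
    then have "\<forall>\<Delta>\<in>E. \<exists>\<gamma>\<in>\<Delta>. \<omega> \<in> \<gamma>" using part partition_onD1 by blast
    then obtain c where "\<forall>\<Delta>\<in>E. c \<Delta> \<in> \<Delta> \<and> \<omega> \<in> c \<Delta>" by metis
    then have "restrict c E \<in> ?C" and "\<omega> \<in> ?pt (restrict c E)" using \<open>\<omega> \<in> \<Omega>\<close> by auto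
    then show "\<omega> \<in> (\<Union>c\<in>?C. ?pt c)" by blast
  qed auto
  also have "card \<dots> = (\<Sum>c\<in>?C. card (?pt c))"
  proof (rule card_UN_disjoint[OF finite_C])
    show "\<forall>c\<in>?C. finite (?pt c)" using assms(1) by blast
    show "\<forall>c\<in>?C. \<forall>c'\<in>?C. c \<noteq> c' \<longrightarrow> ?pt c \<inter> ?pt c' = {}"
    proof (intro ballI impI)
      fix c c' assume c: "c \<in> ?C" and c': "c' \<in> ?C" and "c \<noteq> c'"
      then obtain \<Delta> where \<Delta>: "\<Delta> \<in> E" "c \<Delta> \<noteq> c' \<Delta>" by (meson PiE_ext)
      then have "c \<Delta> \<inter> c' \<Delta> = {}"
        using c c' disjointD[OF partition_onD2[OF part[OF \<Delta>(1)]]] by blast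
      then show "?pt c \<inter> ?pt c' = {}" using \<Delta>(1) by blast
    qed
  qed
  also have "\<dots> = card ?C"
    using cd by (simp add: cartesian_decomposition_def PiE_iff)
  also have "\<dots> = (\<Prod>\<Delta>\<in>E. card \<Delta>)"
    using finite_cartesian_decomposition[OF assms] by (rule card_PiE)
  finally show ?thesis .
qed

lemma power_dvd_card_cartesian_decomposition:
  assumes "finite \<Omega>" and cd: "cartesian_decomposition \<Omega> E"
    and "Q \<subseteq> E" and "\<And>\<Delta>. \<Delta> \<in> Q \<Longrightarrow> card \<Delta> = n"
  shows "n ^ card Q dvd card \<Omega>"
proof -
  have "n ^ card Q = (\<Prod>\<Delta>\<in>Q. card \<Delta>)" using assms(4) by simp
  also have "\<dots> dvd (\<Prod>\<Delta>\<in>E. card \<Delta>)"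
    using finite_cartesian_decomposition[OF assms(1) cd] assms(3) by (rule prod_dvd_prod_subset)
  also have "\<dots> = card \<Omega>" using card_cartesian_decomposition[OF assms(1) cd] by simp
  finally show ?thesis .
qed

definition part_orbit :: "('a \<Rightarrow> 'a) set \<Rightarrow> 'a set set \<Rightarrow> 'a set set set" where
  "part_orbit G \<Gamma> = (\<lambda>g. part_image g \<Gamma>) ` G"

lemma part_orbit_subset:
  "invariant_decomposition G E \<Longrightarrow> \<Gamma> \<in> E \<Longrightarrow> part_orbit G \<Gamma> \<subseteq> E"
  by (auto simp: part_orbit_def invariant_decomposition_def)

lemma mem_part_orbit_self:
  assumes "perm_group_on \<Omega> G" and "\<Gamma> \<subseteq> Pow \<Omega>"
  shows "\<Gamma> \<in> part_orbit G \<Gamma>"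
proof -
  have "(\<lambda>x\<in>\<Omega>. x) \<in> G"
    using subgroup.one_closed[of G "BijGroup \<Omega>"] assms(1) by (simp add: perm_group_on_def BijGroup_def)
  then show ?thesis
    using part_image_restrict_id[OF assms(2)] unfolding part_orbit_def by (metis image_eqI)
qed

lemma card_mem_part_orbit:
  assumes "perm_group_on \<Omega> G" and "\<Gamma> \<subseteq> Pow \<Omega>" and "\<Delta> \<in> part_orbit G \<Gamma>"
  shows "card \<Delta> = card \<Gamma>"
proof -
  obtain g where "g \<in> G" and "\<Delta> = part_image g \<Gamma>" using assms(3) by (auto simp: part_orbit_def)
  then show ?thesis using card_part_image[OF _ assms(2)] perm_group_on_subset_Bij[OF assms(1)] by blast
qed

lemma group_action_part_orbit:
  assumes "perm_group_on \<Omega> G" and "\<Gamma> \<subseteq> Pow \<Omega>"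
  shows "group_action (perm_grp \<Omega> G) (part_orbit G \<Gamma>)
    (\<lambda>g. restrict (part_image_action \<Omega> g) (part_orbit G \<Gamma>))"
proof -
  have act: "group_action (perm_grp \<Omega> G) (Pow (Pow \<Omega>)) (part_image_action \<Omega>)"
    using group_action.induced_action[OF group_action_part_image] assms(1)
    by (simp add: perm_group_on_def perm_grp_def)
  have "orbit (perm_grp \<Omega> G) (part_image_action \<Omega>) \<Gamma> = part_orbit G \<Gamma>"
    using assms(2) by (auto simp: orbit_def part_orbit_def perm_grp_def part_image_action_def)
  moreover have "group_action (perm_grp \<Omega> G) (orbit (perm_grp \<Omega> G) (part_image_action \<Omega>) \<Gamma>)
    (\<lambda>g. restrict (part_image_action \<Omega> g) (orbit (perm_grp \<Omega> G) (part_image_action \<Omega>) \<Gamma>))"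
    by (rule group_action.orbit_action[OF act]) (use assms(2) in simp)
  ultimately show ?thesis by simp
qed

lemma minimal_normal_fixes_or_card_dvd_fact:
  assumes "perm_group_on \<Omega> G" and "minimal_normal \<Omega> G M" and "\<Gamma> \<subseteq> Pow \<Omega>"
    and "finite (part_orbit G \<Gamma>)"
  shows "(\<forall>m\<in>M. part_image m \<Gamma> = \<Gamma>) \<or> card M dvd fact (card (part_orbit G \<Gamma>))"
proof -
  have "\<Gamma> \<in> part_orbit G \<Gamma>" using assms(1,3) by (rule mem_part_orbit_self)
  moreover have "(\<forall>m\<in>M. \<forall>\<Delta>\<in>part_orbit G \<Gamma>.
      restrict (part_image_action \<Omega> m) (part_orbit G \<Gamma>) \<Delta> = \<Delta>) \<or>
      card M dvd fact (card (part_orbit G \<Gamma>))"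
    using group_action.minimal_normal_acts_trivially_or_card_dvd_fact
      [OF group_action_part_orbit[OF assms(1,3)] assms(4)] assms(2)
    unfolding minimal_normal_def by blast
  moreover have "restrict (part_image_action \<Omega> m) (part_orbit G \<Gamma>) \<Gamma> = part_image m \<Gamma>" for m
    using \<open>\<Gamma> \<in> part_orbit G \<Gamma>\<close> assms(3) by (simp add: part_image_action_def)
  ultimately show ?thesis by metis
qed

lemma invariant_partition_card_eq_1:
  assumes "partition_on \<Omega> \<Gamma>" and "card \<Gamma> = 1" and "M \<subseteq> Bij \<Omega>"
  shows "invariant_partition M \<Gamma>"
proof -
  have "\<Gamma> = {\<Omega>}" using assms(1,2) by (auto dest!: partition_onD1 simp: card_1_singleton_iff)
  then show ?thesis using assms(3) by (auto simp: invariant_partition_def Bij_def bij_betw_def)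
qed

theorem proposition3p1:
  fixes \<Omega> :: "'a set" and G M :: "('a \<Rightarrow> 'a) set" and E :: "'a set set set"
  assumes "finite \<Omega>"
    and "innately_transitive \<Omega> G"
    and "plinth \<Omega> G M"
    and "cartesian_decomposition \<Omega> E"
    and "invariant_decomposition G E"
  shows "\<forall>\<Gamma>\<in>E. invariant_partition M \<Gamma>"
proof
  fix \<Gamma> assume "\<Gamma> \<in> E"
  let ?Q = "part_orbit G \<Gamma>"
  have part: "partition_on \<Omega> \<Gamma>" using assms(4) \<open>\<Gamma> \<in> E\<close> by (simp add: cartesian_decomposition_def)
  have G: "perm_group_on \<Omega> G" using assms(2) by (simp add: innately_transitive_def)
  have M: "minimal_normal \<Omega> G M" "transitive_on \<Omega> M" using assms(3) by (simp_all add: plinth_def)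
  have \<Gamma>_Pow: "\<Gamma> \<subseteq> Pow \<Omega>" using part by (rule partition_on_subset_Pow)
  have M_sub: "subgroup M (BijGroup \<Omega>)" using G M(1) by (rule minimal_normal_subgroup_BijGroup)
  have "?Q \<subseteq> E" using assms(5) \<open>\<Gamma> \<in> E\<close> by (rule part_orbit_subset)
  then have "finite ?Q" using finite_cartesian_decomposition[OF assms(1,4)] by (rule finite_subset)
  from minimal_normal_fixes_or_card_dvd_fact[OF G M(1) \<Gamma>_Pow this]
  show "invariant_partition M \<Gamma>"
  proof
    assume "\<forall>m\<in>M. part_image m \<Gamma> = \<Gamma>"
    then show ?thesis by (auto simp: invariant_partition_def part_image_def)
  next
    assume "card M dvd fact (card ?Q)"
    show ?thesis
    proof (cases "\<Gamma> = {}")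
      case False
      then have "\<Omega> \<noteq> {}" using part by (auto simp: partition_on_empty)
      have "card \<Gamma> ^ card ?Q dvd card \<Omega>"
        using power_dvd_card_cartesian_decomposition[OF assms(1,4) \<open>?Q \<subseteq> E\<close>
          card_mem_part_orbit[OF G \<Gamma>_Pow]] .
      also have "card \<Omega> dvd card M"
        using card_dvd_card_transitive_subgroup[OF M_sub M(2) \<open>\<Omega> \<noteq> {}\<close>] .
      also have "card M dvd fact (card ?Q)" by fact
      finally have "card \<Gamma> = 1"
      proof (rule power_dvd_fact_imp_eq_1)
        show "card ?Q > 0"
          using mem_part_orbit_self[OF G \<Gamma>_Pow] \<open>finite ?Q\<close> by (auto simp: card_gt_0_iff)
      qed
      then show ?thesis
        using invariant_partition_card_eq_1 part subgroup.subset[OF M_sub] by (simp add: BijGroup_def)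
    qed (simp add: invariant_partition_def)
  qed
qed

end
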